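(* Let $t_0<t_1<+\infty$ and let $a_{jk}(t),\ c_{jk}(t)$ ($j,k=1,2$) be complex-valued continuous functions on $[t_0;t_1)$ with $c_{11},c_{22}$ real-valued and $c_{21}=\overline{c}_{12}$, and let $b_1(t),b_2(t)$ be real-valued continuous functions with $b_j(t)>0$, $t\in[t_0;t_1)$, $j=1,2$. Assume that the functions $a_{12}(t)/b_1(t)$ and $\overline{a}_{21}(t)/b_2(t)$ are continuously differentiable on $[t_0;t_1)$. Let $z_{11}(t),z_{22}(t)$ be real-valued and $y(t),v(t)$ complex-valued continuously differentiable functions on $[t_0;t_1)$ satisfying, for $t\in[t_0;t_1)$, the system $$z_{11}'+b_1z_{11}^2+2(\mathrm{Re}\,a_{11})z_{11}+b_2|y|^2-\frac{|a_{21}|^2}{b_2}-c_{11}=0,$$ $$y'+\bigl[b_1z_{11}+b_2z_{22}+\overline{a}_{11}+a_{22}\bigr]y+\Bigl(a_{12}-\frac{b_1}{b_2}\overline{a}_{21}\Bigr)z_{11}-\Bigl(\frac{\overline{a}_{21}}{b_2}\Bigr)'-\frac{\overline{a}_{21}}{b_2}\bigl(\overline{a}_{11}+a_{22}\bigr)-c_{12}=0,$$ and the system $$z_{22}'+b_2z_{22}^2+2(\mathrm{Re}\,a_{22})z_{22}+b_1|v|^2-\frac{|a_{12}|^2}{b_1}-c_{22}=0,$$ $$v'+\bigl[b_1z_{11}+b_2z_{22}+\overline{a}_{11}+a_{22}\bigr]v+\Bigl(\overline{a}_{21}-\frac{b_2}{b_1}a_{12}\Bigr)z_{22}-\Bigl(\frac{a_{12}}{b_1}\Bigr)'-\frac{a_{12}}{b_1}\bigl(\overline{a}_{11}+a_{22}\bigr)-c_{12}=0,$$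 (all coefficients evaluated at $t$), and such that $z_{jj}(t)\ge0$ for $t\in[t_0;t_1)$, $j=1,2$, and $y(t_0)=v(t_0)=0$. Then for all $t\in[t_0;t_1)$ $$|y(t)|\le\mathfrak{M}(t)+\int_{t_0}^{t}\biggl|\exp\Bigl\{-\int_\tau^t\bigl(\overline{a}_{11}(s)+a_{22}(s)\bigr)ds\Bigr\}\Bigl[\Bigl(\frac{\overline{a}_{21}}{b_2}\Bigr)'(\tau)+\frac{\overline{a}_{21}(\tau)}{b_2(\tau)}\bigl(\overline{a}_{11}(\tau)+a_{22}(\tau)\bigr)+c_{12}(\tau)\Bigr]\biggr|d\tau,$$ $$|v(t)|\le\mathfrak{M}(t)+\int_{t_0}^{t}\biggl|\exp\Bigl\{-\int_\tau^t\bigl(\overline{a}_{11}(s)+a_{22}(s)\bigr)ds\Bigr\}\Bigl[\Bigl(\frac{a_{12}}{b_1}\Bigr)'(\tau)+\frac{a_{12}(\tau)}{b_1(\tau)}\bigl(\overline{a}_{11}(\tau)+a_{22}(\tau)\bigr)+c_{12}(\tau)\Bigr]\biggr|d\tau,$$ where $$\mathfrak{M}(t)=\max_{\tau\in[t_0;t]}\biggl|\exp\Bigl\{-\int_\tau^t\bigl(\overline{a}_{11}(s)+a_{22}(s)\bigr)ds\Bigr\}\Bigl(\frac{a_{12}(\tau)}{b_1(\tau)}-\frac{\overline{a}_{21}(\tau)}{b_2(\tau)}\Bigr)\biggr|.$$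
   Context: Overline denotes complex conjugation; $\mathrm{Re}$ denotes the real part. *)

theory Defs
  imports "HOL-Analysis.Analysis"
begin

definition expfac :: "(real \<Rightarrow> complex) \<Rightarrow> (real \<Rightarrow> complex) \<Rightarrow> real \<Rightarrow> real \<Rightarrow> complex" where
  "expfac a11 a22 \<tau> t = exp (- integral {\<tau>..t} (\<lambda>s. cnj (a11 s) + a22 s))"

text \<open>The quantity frak M(t): maximum over [t0,t] (attained by continuity and compactness,
  so written as a supremum).\<close>
definition frakM :: "(real \<Rightarrow> complex) \<Rightarrow> (real \<Rightarrow> complex) \<Rightarrow> (real \<Rightarrow> complex) \<Rightarrow> (real \<Rightarrow> complex)
    \<Rightarrow> (real \<Rightarrow> real) \<Rightarrow> (real \<Rightarrow> real) \<Rightarrow> real \<Rightarrow> real \<Rightarrow> real" where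
  "frakM a11 a12 a21 a22 b1 b2 t0 t =
     Sup ((\<lambda>\<tau>. cmod (expfac a11 a22 \<tau> t *
        (a12 \<tau> / complex_of_real (b1 \<tau>) - cnj (a21 \<tau>) / complex_of_real (b2 \<tau>)))) ` {t0..t})"

end

theory Submission
  imports Defs
begin

text \<open>
  Both y and v solve a scalar linear equation u' = F - W P - (Z + A) u with u(t0) = 0, where
  A = conj a11 + a22, Z = b1 z11 + b2 z22, W is one of the two nonnegative summands of Z, and
  P = +-(a12/b1 - conj a21/b2). Variation of constants writes u(t) as the integral over [t0, t] of
  R(tau) E(tau) (F - W P), with E(tau) = exp(-int_tau^t A) and R(tau) = exp(-int_tau^t Z) in (0, 1].
  Since R' = R Z, the P-term is at most sup |E P| times int R W <= int R Z = 1 - R(t0) <= 1,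
  and R <= 1 takes care of the F-term.
\<close>

lemma integral_tail_eq:
  fixes f :: "real \<Rightarrow> 'a::banach"
  assumes f: "continuous_on {a..b} f" and c: "c \<in> {a..b}"
  shows "integral {c..b} f = integral {a..b} f - integral {a..c} f"
  using Henstock_Kurzweil_Integration.integral_combine[of a c b f] c integrable_continuous_interval[OF f]
  by (auto simp: algebra_simps)

lemma has_vector_derivative_exp_neg_integral:
  fixes A :: "real \<Rightarrow> 'a::{real_normed_field,banach}"
  assumes A: "continuous_on {a..b} A" and s: "s \<in> {a..b}"
  shows "((\<lambda>\<tau>. exp (- integral {\<tau>..b} A)) has_vector_derivative A s * exp (- integral {s..b} A))
           (at s within {a..b})"
proof -
  have tail: "integral {a..\<tau>} A - integral {a..b} A = - integral {\<tau>..b} A" if "\<tau> \<in> {a..b}" for \<tau>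
    by (simp add: integral_tail_eq[OF A that])
  have "((exp \<circ> (\<lambda>\<tau>. integral {a..\<tau>} A - integral {a..b} A)) has_vector_derivative
          A s * exp (integral {a..s} A - integral {a..b} A)) (at s within {a..b})"
    by (rule field_vector_diff_chain_within)
      (auto intro!: derivative_eq_intros integral_has_vector_derivative[OF A s])
  then show ?thesis
    unfolding o_def tail[OF s]
    by (rule has_vector_derivative_transform[rotated 2]) (use s tail in auto)
qed

lemma continuous_on_exp_neg_integral:
  fixes A :: "real \<Rightarrow> 'a::{real_normed_field,banach}"
  assumes "continuous_on {a..b} A"
  shows "continuous_on {a..b} (\<lambda>\<tau>. exp (- integral {\<tau>..b} A))"
  unfolding continuous_on_eq_continuous_within
  using has_vector_derivative_exp_neg_integral[OF assms] has_vector_derivative_continuous by blast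

lemma variation_of_constants:
  fixes A G u du :: "real \<Rightarrow> 'a::{real_normed_field,banach}"
  assumes t: "t0 \<le> t" and A: "continuous_on {t0..t} A"
    and du: "\<And>s. s \<in> {t0..t} \<Longrightarrow> (u has_vector_derivative du s) (at s within {t0..t})"
    and eq: "\<And>s. s \<in> {t0..t} \<Longrightarrow> du s = G s - A s * u s"
  shows "((\<lambda>\<tau>. exp (- integral {\<tau>..t} A) * G \<tau>) has_integral
           u t - exp (- integral {t0..t} A) * u t0) {t0..t}"
proof -
  define E where "E \<tau> = exp (- integral {\<tau>..t} A)" for \<tau>
  have "((\<lambda>\<tau>. E \<tau> * u \<tau>) has_vector_derivative E s * G s) (at s within {t0..t})"
    if s: "s \<in> {t0..t}" for s
  proof -
    have "((\<lambda>\<tau>. E \<tau> * u \<tau>) has_vector_derivative E s * du s + A s * E s * u s) (at s within {t0..t})"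
      unfolding E_def
      by (intro has_vector_derivative_mult has_vector_derivative_exp_neg_integral A du s)
    then show ?thesis by (simp add: eq[OF s] algebra_simps)
  qed
  from fundamental_theorem_of_calculus[OF t this] show ?thesis
    by (simp add: E_def)
qed

lemma has_integral_mult_exp_neg_integral:
  fixes Z :: "real \<Rightarrow> 'a::{real_normed_field,banach}"
  assumes "t0 \<le> t" "continuous_on {t0..t} Z"
  shows "((\<lambda>\<tau>. exp (- integral {\<tau>..t} Z) * Z \<tau>) has_integral 1 - exp (- integral {t0..t} Z)) {t0..t}"
  using variation_of_constants[OF assms, of "\<lambda>_. 1" "\<lambda>_. 0" Z] by simp

lemma exp_neg_integral_of_real_add:
  fixes Z :: "real \<Rightarrow> real" and A :: "real \<Rightarrow> complex"
  assumes "continuous_on {\<tau>..t} Z" "continuous_on {\<tau>..t} A"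
  shows "exp (- integral {\<tau>..t} (\<lambda>s. of_real (Z s) + A s))
           = of_real (exp (- integral {\<tau>..t} Z)) * exp (- integral {\<tau>..t} A)"
proof -
  have "integral {\<tau>..t} (\<lambda>s. of_real (Z s) + A s) = of_real (integral {\<tau>..t} Z) + integral {\<tau>..t} A"
    using has_integral_of_real[OF integrable_integral[OF integrable_continuous_interval[OF assms(1)]]]
      integrable_integral[OF integrable_continuous_interval[OF assms(2)]]
    by (intro integral_unique has_integral_add) auto
  then show ?thesis by (simp add: exp_add[symmetric] exp_of_real[symmetric])
qed

lemma linear_ode_damped_bound:
  fixes t0 t :: real and A F P u du :: "real \<Rightarrow> complex" and Z W :: "real \<Rightarrow> real"
  assumes t: "t0 \<le> t"
    and cont: "continuous_on {t0..t} A" "continuous_on {t0..t} F" "continuous_on {t0..t} P"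
      "continuous_on {t0..t} Z"
    and du: "\<And>s. s \<in> {t0..t} \<Longrightarrow> (u has_vector_derivative du s) (at s within {t0..t})"
    and W: "\<And>s. s \<in> {t0..t} \<Longrightarrow> 0 \<le> W s" "\<And>s. s \<in> {t0..t} \<Longrightarrow> W s \<le> Z s"
    and eq: "\<And>s. s \<in> {t0..t} \<Longrightarrow>
      du s = F s - of_real (W s) * P s - (of_real (Z s) + A s) * u s"
    and u0: "u t0 = 0"
  shows "cmod (u t) \<le> Sup ((\<lambda>\<tau>. cmod (exp (- integral {\<tau>..t} A) * P \<tau>)) ` {t0..t})
     + integral {t0..t} (\<lambda>\<tau>. cmod (exp (- integral {\<tau>..t} A) * F \<tau>))"
proof -
  define E where "E \<tau> = exp (- integral {\<tau>..t} A)" for \<tau>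
  define R where "R \<tau> = exp (- integral {\<tau>..t} Z)" for \<tau>
  define M where "M = Sup ((\<lambda>\<tau>. cmod (E \<tau> * P \<tau>)) ` {t0..t})"
  define k where "k \<tau> = of_real (R \<tau>) * E \<tau> * (F \<tau> - of_real (W \<tau>) * P \<tau>)" for \<tau>
  define g where "g \<tau> = M * (R \<tau> * Z \<tau>) + cmod (E \<tau> * F \<tau>)" for \<tau>
  have sub: "{\<tau>..t} \<subseteq> {t0..t}" if "\<tau> \<in> {t0..t}" for \<tau>
    using that by auto
  have Z0: "0 \<le> Z s" if "s \<in> {t0..t}" for s
    using W[OF that] by linarith
  have R: "0 < R \<tau>" "R \<tau> \<le> 1" if "\<tau> \<in> {t0..t}" for \<tau>
  proof -
    have "0 \<le> integral {\<tau>..t} Z"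
      using Z0 sub[OF that]
      by (intro integral_nonneg integrable_continuous_interval continuous_on_subset[OF cont(4)]) auto
    then show "0 < R \<tau>" "R \<tau> \<le> 1"
      by (simp_all add: R_def)
  qed
  have "((\<lambda>\<tau>. exp (- integral {\<tau>..t} (\<lambda>s. of_real (Z s) + A s)) * (F \<tau> - of_real (W \<tau>) * P \<tau>))
          has_integral u t) {t0..t}"
    using variation_of_constants[OF t _ du eq] u0 by (simp add: continuous_intros cont)
  moreover have "exp (- integral {\<tau>..t} (\<lambda>s. of_real (Z s) + A s)) * (F \<tau> - of_real (W \<tau>) * P \<tau>) = k \<tau>"
    if "\<tau> \<in> {t0..t}" for \<tau>
    unfolding k_def R_def E_def
    by (simp add: exp_neg_integral_of_real_add[OF continuous_on_subset[OF cont(4) sub[OF that]]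
          continuous_on_subset[OF cont(1) sub[OF that]]])
  ultimately have int_k: "(k has_integral u t) {t0..t}"
    by (rule has_integral_eq[rotated])
  have bdd: "bdd_above ((\<lambda>\<tau>. cmod (E \<tau> * P \<tau>)) ` {t0..t})"
    unfolding E_def
    by (intro bounded_imp_bdd_above compact_imp_bounded compact_continuous_image compact_Icc
        continuous_intros continuous_on_exp_neg_integral cont)
  have EP: "cmod (E \<tau> * P \<tau>) \<le> M" if "\<tau> \<in> {t0..t}" for \<tau>
    unfolding M_def using bdd that by (auto intro: cSup_upper)
  have M0: "0 \<le> M"
    using EP[of t0] t by (meson atLeastAtMost_iff norm_ge_zero order.trans order_refl)
  have kg: "cmod (k \<tau>) \<le> g \<tau>" if \<tau>: "\<tau> \<in> {t0..t}" for \<tau>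
  proof -
    have "k \<tau> = of_real (R \<tau>) * (E \<tau> * F \<tau> - of_real (W \<tau>) * (E \<tau> * P \<tau>))"
      unfolding k_def by (simp add: algebra_simps)
    then have "cmod (k \<tau>) = R \<tau> * cmod (E \<tau> * F \<tau> - of_real (W \<tau>) * (E \<tau> * P \<tau>))"
      using R(1)[OF \<tau>] by (simp add: norm_mult)
    also have "\<dots> \<le> R \<tau> * (cmod (E \<tau> * F \<tau>) + W \<tau> * M)"
    proof (rule mult_left_mono)
      have "cmod (of_real (W \<tau>) * (E \<tau> * P \<tau>)) \<le> W \<tau> * M"
        using W(1)[OF \<tau>] EP[OF \<tau>] by (simp add: norm_mult mult_left_mono)
      then show "cmod (E \<tau> * F \<tau> - of_real (W \<tau>) * (E \<tau> * P \<tau>)) \<le> cmod (E \<tau> * F \<tau>) + W \<tau> * M"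
        using norm_triangle_ineq4[of "E \<tau> * F \<tau>" "of_real (W \<tau>) * (E \<tau> * P \<tau>)"]
        by linarith
    qed (use R(1)[OF \<tau>] in simp)
    also have "\<dots> = R \<tau> * cmod (E \<tau> * F \<tau>) + M * (R \<tau> * W \<tau>)"
      by (simp add: algebra_simps)
    also have "\<dots> \<le> g \<tau>"
    proof -
      have "R \<tau> * cmod (E \<tau> * F \<tau>) \<le> cmod (E \<tau> * F \<tau>)"
        using R[OF \<tau>] by (simp add: mult_left_le_one_le)
      moreover have "M * (R \<tau> * W \<tau>) \<le> M * (R \<tau> * Z \<tau>)"
        using R(1)[OF \<tau>] W(2)[OF \<tau>] M0 by (simp add: mult_left_mono)
      ultimately show ?thesis
        unfolding g_def by linarith
    qed
    finally show ?thesis .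
  qed
  have int_RZ: "((\<lambda>\<tau>. R \<tau> * Z \<tau>) has_integral 1 - R t0) {t0..t}"
    unfolding R_def by (rule has_integral_mult_exp_neg_integral[OF t cont(4)])
  have int_EF: "(\<lambda>\<tau>. cmod (E \<tau> * F \<tau>)) integrable_on {t0..t}"
    unfolding E_def
    by (intro integrable_continuous_interval continuous_intros continuous_on_exp_neg_integral cont)
  have int_g: "g integrable_on {t0..t}"
    unfolding g_def
    by (intro integrable_add integrable_on_mult_right has_integral_integrable[OF int_RZ] int_EF)
  have "cmod (u t) \<le> integral {t0..t} g"
    using integral_norm_bound_integral[OF has_integral_integrable[OF int_k] int_g kg]
    unfolding integral_unique[OF int_k] .
  also have "integral {t0..t} g = M * (1 - R t0) + integral {t0..t} (\<lambda>\<tau>. cmod (E \<tau> * F \<tau>))"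
    unfolding g_def
    using integral_add[OF integrable_on_mult_right[OF has_integral_integrable[OF int_RZ]] int_EF]
      integral_unique[OF int_RZ] by simp
  also have "\<dots> \<le> M + integral {t0..t} (\<lambda>\<tau>. cmod (E \<tau> * F \<tau>))"
    using M0 R(1)[of t0] t by (simp add: mult_left_le)
  finally show ?thesis
    unfolding M_def E_def .
qed

lemma linear_ode_damped_bound_atLeastLessThan:
  fixes t0 t1 t :: real and A F P u du :: "real \<Rightarrow> complex" and W V :: "real \<Rightarrow> real"
  assumes t: "t \<in> {t0..<t1}"
    and cont: "continuous_on {t0..<t1} A" "continuous_on {t0..<t1} F" "continuous_on {t0..<t1} P"
      "continuous_on {t0..<t1} W" "continuous_on {t0..<t1} V"
    and du: "\<And>s. s \<in> {t0..<t1} \<Longrightarrow> (u has_vector_derivative du s) (at s within {t0..<t1})"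
    and nonneg: "\<And>s. s \<in> {t0..<t1} \<Longrightarrow> 0 \<le> W s" "\<And>s. s \<in> {t0..<t1} \<Longrightarrow> 0 \<le> V s"
    and eq: "\<And>s. s \<in> {t0..<t1} \<Longrightarrow>
      du s = F s - of_real (W s) * P s - (of_real (W s + V s) + A s) * u s"
    and u0: "u t0 = 0"
  shows "cmod (u t) \<le> Sup ((\<lambda>\<tau>. cmod (exp (- integral {\<tau>..t} A) * P \<tau>)) ` {t0..t})
     + integral {t0..t} (\<lambda>\<tau>. cmod (exp (- integral {\<tau>..t} A) * F \<tau>))"
proof -
  from t have t0: "t0 \<le> t" and sub: "{t0..t} \<subseteq> {t0..<t1}"
    by auto
  have cont': "continuous_on {t0..t} A" "continuous_on {t0..t} F" "continuous_on {t0..t} P"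
    "continuous_on {t0..t} (\<lambda>s. W s + V s)"
    using cont by (auto intro!: continuous_intros intro: continuous_on_subset[OF _ sub])
  have du': "(u has_vector_derivative du s) (at s within {t0..t})" if "s \<in> {t0..t}" for s
    using has_vector_derivative_within_subset[OF du sub] that sub by auto
  show ?thesis
    using nonneg eq sub
    by (intro linear_ode_damped_bound[OF t0 cont' du' _ _ _ u0, where W = W]) auto
qed

theorem lemma2p2:
  fixes t0 t1 :: real
    and a11 a12 a21 a22 c12 c21 :: "real \<Rightarrow> complex"
    and c11 c22 b1 b2 :: "real \<Rightarrow> real"
    and z11 z22 dz11 dz22 :: "real \<Rightarrow> real"
    and y v dy dv dp dq :: "real \<Rightarrow> complex"
  assumes t01: "t0 < t1"
    and cont: "continuous_on {t0..<t1} a11" "continuous_on {t0..<t1} a12"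
      "continuous_on {t0..<t1} a21" "continuous_on {t0..<t1} a22"
      "continuous_on {t0..<t1} c11" "continuous_on {t0..<t1} c12"
      "continuous_on {t0..<t1} c21" "continuous_on {t0..<t1} c22"
      "continuous_on {t0..<t1} b1" "continuous_on {t0..<t1} b2"
    and c21: "\<And>t. t \<in> {t0..<t1} \<Longrightarrow> c21 t = cnj (c12 t)"
    and bpos: "\<And>t. t \<in> {t0..<t1} \<Longrightarrow> b1 t > 0" "\<And>t. t \<in> {t0..<t1} \<Longrightarrow> b2 t > 0"
    and dp: "\<And>t. t \<in> {t0..<t1} \<Longrightarrow>
        ((\<lambda>s. a12 s / complex_of_real (b1 s)) has_vector_derivative dp t) (at t within {t0..<t1})"
      "continuous_on {t0..<t1} dp"
    and dq: "\<And>t. t \<in> {t0..<t1} \<Longrightarrow>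
        ((\<lambda>s. cnj (a21 s) / complex_of_real (b2 s)) has_vector_derivative dq t) (at t within {t0..<t1})"
      "continuous_on {t0..<t1} dq"
    and dz11: "\<And>t. t \<in> {t0..<t1} \<Longrightarrow> (z11 has_real_derivative dz11 t) (at t within {t0..<t1})"
      "continuous_on {t0..<t1} dz11"
    and dz22: "\<And>t. t \<in> {t0..<t1} \<Longrightarrow> (z22 has_real_derivative dz22 t) (at t within {t0..<t1})"
      "continuous_on {t0..<t1} dz22"
    and dy: "\<And>t. t \<in> {t0..<t1} \<Longrightarrow> (y has_vector_derivative dy t) (at t within {t0..<t1})"
      "continuous_on {t0..<t1} dy"
    and dv: "\<And>t. t \<in> {t0..<t1} \<Longrightarrow> (v has_vector_derivative dv t) (at t within {t0..<t1})"
      "continuous_on {t0..<t1} dv"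
    and eq1: "\<And>t. t \<in> {t0..<t1} \<Longrightarrow>
        dz11 t + b1 t * (z11 t)\<^sup>2 + 2 * Re (a11 t) * z11 t + b2 t * (cmod (y t))\<^sup>2
        - (cmod (a21 t))\<^sup>2 / b2 t - c11 t = 0"
    and eq2: "\<And>t. t \<in> {t0..<t1} \<Longrightarrow>
        dy t + (complex_of_real (b1 t * z11 t + b2 t * z22 t) + cnj (a11 t) + a22 t) * y t
        + (a12 t - complex_of_real (b1 t / b2 t) * cnj (a21 t)) * complex_of_real (z11 t)
        - dq t - cnj (a21 t) / complex_of_real (b2 t) * (cnj (a11 t) + a22 t) - c12 t = 0"
    and eq3: "\<And>t. t \<in> {t0..<t1} \<Longrightarrow>
        dz22 t + b2 t * (z22 t)\<^sup>2 + 2 * Re (a22 t) * z22 t + b1 t * (cmod (v t))\<^sup>2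
        - (cmod (a12 t))\<^sup>2 / b1 t - c22 t = 0"
    and eq4: "\<And>t. t \<in> {t0..<t1} \<Longrightarrow>
        dv t + (complex_of_real (b1 t * z11 t + b2 t * z22 t) + cnj (a11 t) + a22 t) * v t
        + (cnj (a21 t) - complex_of_real (b2 t / b1 t) * a12 t) * complex_of_real (z22 t)
        - dp t - a12 t / complex_of_real (b1 t) * (cnj (a11 t) + a22 t) - c12 t = 0"
    and znonneg: "\<And>t. t \<in> {t0..<t1} \<Longrightarrow> z11 t \<ge> 0" "\<And>t. t \<in> {t0..<t1} \<Longrightarrow> z22 t \<ge> 0"
    and init: "y t0 = 0" "v t0 = 0"
  shows "\<forall>t \<in> {t0..<t1}.
      cmod (y t) \<le> frakM a11 a12 a21 a22 b1 b2 t0 t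
        + integral {t0..t} (\<lambda>\<tau>. cmod (expfac a11 a22 \<tau> t *
            (dq \<tau> + cnj (a21 \<tau>) / complex_of_real (b2 \<tau>) * (cnj (a11 \<tau>) + a22 \<tau>) + c12 \<tau>)))
    \<and> cmod (v t) \<le> frakM a11 a12 a21 a22 b1 b2 t0 t
        + integral {t0..t} (\<lambda>\<tau>. cmod (expfac a11 a22 \<tau> t *
            (dp \<tau> + a12 \<tau> / complex_of_real (b1 \<tau>) * (cnj (a11 \<tau>) + a22 \<tau>) + c12 \<tau>)))"
  apply (intro ballI)
  subgoal premises t_mem for t
  proof -
    have continuous_if_derivative: "continuous_on {t0..<t1} f"
      if "\<And>s. s \<in> {t0..<t1} \<Longrightarrow> (f has_vector_derivative f' s) (at s within {t0..<t1})"
      for f f' :: "real \<Rightarrow> 'b::real_normed_vector"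
      using that has_vector_derivative_continuous continuous_on_eq_continuous_within by blast
    define A where "A s = cnj (a11 s) + a22 s" for s
    define p where "p s = a12 s / complex_of_real (b1 s)" for s
    define q where "q s = cnj (a21 s) / complex_of_real (b2 s)" for s
    have cz: "continuous_on {t0..<t1} z11" "continuous_on {t0..<t1} z22"
      using continuous_if_derivative[of z11 dz11] continuous_if_derivative[of z22 dz22] dz11(1) dz22(1)
      unfolding has_real_derivative_iff_has_vector_derivative by blast+
    have cpq: "continuous_on {t0..<t1} p" "continuous_on {t0..<t1} q"
      using continuous_if_derivative[OF dp(1)] continuous_if_derivative[OF dq(1)]
      unfolding p_def q_def by blast+
    have cA: "continuous_on {t0..<t1} A"
      unfolding A_def by (intro continuous_intros cont)
    have cF: "continuous_on {t0..<t1} (\<lambda>\<tau>. dq \<tau> + q \<tau> * A \<tau> + c12 \<tau>)"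
      "continuous_on {t0..<t1} (\<lambda>\<tau>. dp \<tau> + p \<tau> * A \<tau> + c12 \<tau>)"
      and cP: "continuous_on {t0..<t1} (\<lambda>\<tau>. p \<tau> - q \<tau>)" "continuous_on {t0..<t1} (\<lambda>\<tau>. q \<tau> - p \<tau>)"
      and cW: "continuous_on {t0..<t1} (\<lambda>s. b1 s * z11 s)" "continuous_on {t0..<t1} (\<lambda>s. b2 s * z22 s)"
      by (intro continuous_intros cont cz dp(2) dq(2) cpq cA)+
    have W: "0 \<le> b1 s * z11 s" "0 \<le> b2 s * z22 s" and b: "b1 s \<noteq> 0" "b2 s \<noteq> 0"
      if "s \<in> {t0..<t1}" for s
      using bpos[OF that] znonneg[OF that] by auto
    have factor_weight: "(x - of_real (\<beta> / \<gamma>) * w) * of_real \<zeta>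
        = of_real (\<beta> * \<zeta>) * (x / of_real \<beta> - w / of_real \<gamma>)"
      if "\<beta> \<noteq> 0" "\<gamma> \<noteq> 0" for x w :: complex and \<beta> \<gamma> \<zeta> :: real
      using that by (simp add: field_simps)
    have "cmod (y t) \<le> Sup ((\<lambda>\<tau>. cmod (exp (- integral {\<tau>..t} A) * (p \<tau> - q \<tau>))) ` {t0..t})
        + integral {t0..t} (\<lambda>\<tau>. cmod (exp (- integral {\<tau>..t} A) * (dq \<tau> + q \<tau> * A \<tau> + c12 \<tau>)))"
    proof (rule linear_ode_damped_bound_atLeastLessThan[OF t_mem cA cF(1) cP(1) cW dy(1) W _ init(1)])
      fix s assume s: "s \<in> {t0..<t1}"
      have "(a12 s - of_real (b1 s / b2 s) * cnj (a21 s)) * of_real (z11 s)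
          = of_real (b1 s * z11 s) * (p s - q s)"
        unfolding p_def q_def by (rule factor_weight[OF b[OF s]])
      then show "dy s = dq s + q s * A s + c12 s - of_real (b1 s * z11 s) * (p s - q s)
          - (of_real (b1 s * z11 s + b2 s * z22 s) + A s) * y s"
        using eq2[OF s] unfolding A_def q_def by (auto simp: algebra_simps)
    qed
    moreover have "cmod (v t) \<le> Sup ((\<lambda>\<tau>. cmod (exp (- integral {\<tau>..t} A) * (q \<tau> - p \<tau>))) ` {t0..t})
        + integral {t0..t} (\<lambda>\<tau>. cmod (exp (- integral {\<tau>..t} A) * (dp \<tau> + p \<tau> * A \<tau> + c12 \<tau>)))"
    proof (rule linear_ode_damped_bound_atLeastLessThan[OF t_mem cA cF(2) cP(2) cW(2,1) dv(1) W(2,1) _ init(2)])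
      fix s assume s: "s \<in> {t0..<t1}"
      have "(cnj (a21 s) - of_real (b2 s / b1 s) * a12 s) * of_real (z22 s)
          = of_real (b2 s * z22 s) * (q s - p s)"
        unfolding p_def q_def by (rule factor_weight[OF b(2,1)[OF s]])
      then show "dv s = dp s + p s * A s + c12 s - of_real (b2 s * z22 s) * (q s - p s)
          - (of_real (b2 s * z22 s + b1 s * z11 s) + A s) * v s"
        using eq4[OF s] unfolding A_def p_def by (auto simp: algebra_simps)
    qed
    moreover have "cmod (E * (q \<tau> - p \<tau>)) = cmod (E * (p \<tau> - q \<tau>))" for E \<tau>
      by (simp add: norm_mult norm_minus_commute)
    ultimately show ?thesis
      unfolding frakM_def expfac_def A_def p_def q_def by (simp add: mult.commute)
  qed
  done

end
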